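(* Let $m,d\in\mathbb N$. Let $H$ be a bipartite graph with vertex classes $X$ and $Y$ such that any two sets $X'\subseteq X$, $Y'\subseteq Y$ with $|X'|=|Y'|=m$ have an edge between them. Suppose $X_0\subseteq X$ and $Y_0\subseteq Y$ satisfy $|X_0|,|Y_0|\ge (3d+4)m$. Then there is a set $B\subseteq V(H)$ with $|B|\le 2m$ such that every $U\subseteq V(H)\setminus B$ with $|U|\le m$ satisfies $|N(U,(X_0\cup Y_0)\setminus B)|\ge d|U|$.
   Context: For $U\subseteq V(H)$, $N(U)=\big(\bigcup_{u\in U}N(u)\big)\setminus U$ is the exterior neighbourhood, and $N(U,W)=N(U)\cap W$. *)

theory Defs
  imports Main
begin

definition bipartite_graph :: "'a set \<Rightarrow> 'a set \<Rightarrow> ('a \<Rightarrow> 'a \<Rightarrow> bool) \<Rightarrow> bool" where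
  "bipartite_graph X Y E \<longleftrightarrow>
     finite X \<and> finite Y \<and> X \<inter> Y = {} \<and>
     (\<forall>u v. E u v \<longrightarrow> E v u) \<and>
     (\<forall>u v. E u v \<longrightarrow> (u \<in> X \<and> v \<in> Y) \<or> (u \<in> Y \<and> v \<in> X))"

definition nbhd :: "'a set \<Rightarrow> ('a \<Rightarrow> 'a \<Rightarrow> bool) \<Rightarrow> 'a \<Rightarrow> 'a set" where
  "nbhd V E u = {v \<in> V. E u v}"

definition ext_nbhd :: "'a set \<Rightarrow> ('a \<Rightarrow> 'a \<Rightarrow> bool) \<Rightarrow> 'a set \<Rightarrow> 'a set" where
  "ext_nbhd V E U = (\<Union>u\<in>U. nbhd V E u) - U"

definition nbhd_in :: "'a set \<Rightarrow> ('a \<Rightarrow> 'a \<Rightarrow> bool) \<Rightarrow> 'a set \<Rightarrow> 'a set \<Rightarrow> 'a set" where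
  "nbhd_in V E U W = ext_nbhd V E U \<inter> W"

end

theory Submission
  imports Defs
begin

text \<open>Call a set W of at most 3m vertices non-expanding if it has at most d|W| exterior
neighbours in X0 \<union> Y0. Take a largest non-expanding set B. A non-expanding set meets each class
in fewer than m vertices: m of its vertices in X are adjacent to all but fewer than m vertices
of Y0, which would give it more than d|W| neighbours. Hence |B| \<le> 2m. If some U outside B with
|U| \<le> m had fewer than d|U| neighbours in (X0 \<union> Y0) - B, then B \<union> U would be a larger
non-expanding set.\<close>

definition non_expanding :: "'a set \<Rightarrow> ('a \<Rightarrow> 'a \<Rightarrow> bool) \<Rightarrow> 'a set \<Rightarrow> nat \<Rightarrow> nat \<Rightarrow> 'a set \<Rightarrow> bool"
  where "non_expanding V E Z m d W \<longleftrightarrow>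
    W \<subseteq> V \<and> card W \<le> 3 * m \<and> card (nbhd_in V E W (Z - W)) \<le> d * card W"

lemma card_without_neighbour_less:
  assumes dense: "\<And>S' T'. \<lbrakk>S' \<subseteq> S; T' \<subseteq> T; card S' = m; card T' = m\<rbrakk> \<Longrightarrow>
                    \<exists>s\<in>S'. \<exists>t\<in>T'. E s t"
    and "m \<le> card S"
  shows "card {t \<in> T. \<forall>s\<in>S. \<not> E s t} < m"
proof (rule ccontr)
  assume "\<not> ?thesis"
  then obtain T' where T': "T' \<subseteq> {t \<in> T. \<forall>s\<in>S. \<not> E s t}" "card T' = m"
    by (meson not_less obtain_subset_with_card_n)
  obtain S' where "S' \<subseteq> S" "card S' = m"
    using \<open>m \<le> card S\<close> by (rule obtain_subset_with_card_n)
  with T' dense[of S' T'] show False by auto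
qed

lemma nbhd_in_lower_bound:
  assumes dense: "\<And>S' T'. \<lbrakk>S' \<subseteq> S; T' \<subseteq> T; card S' = m; card T' = m\<rbrakk> \<Longrightarrow>
                    \<exists>s\<in>S'. \<exists>t\<in>T'. E s t"
    and "m \<le> card S" and "S \<subseteq> W" and "T \<subseteq> V" and "T \<subseteq> Z"
    and "finite W" and "finite Z"
  shows "card T < card (nbhd_in V E W (Z - W)) + card W + m"
proof -
  let ?R = "{t \<in> T. \<forall>s\<in>S. \<not> E s t}"
  have "T \<subseteq> ?R \<union> W \<union> nbhd_in V E W (Z - W)"
    using assms(3-5) by (auto simp: nbhd_in_def ext_nbhd_def nbhd_def)
  moreover have "finite (nbhd_in V E W (Z - W))"
    using \<open>finite Z\<close> by (simp add: nbhd_in_def)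
  moreover have "finite ?R"
    using \<open>T \<subseteq> Z\<close> \<open>finite Z\<close> by (auto intro: finite_subset[of _ Z])
  ultimately have "card T \<le> card (?R \<union> W \<union> nbhd_in V E W (Z - W))"
    using \<open>finite W\<close> by (intro card_mono) auto
  also have "\<dots> \<le> card ?R + card W + card (nbhd_in V E W (Z - W))"
    using card_Un_le[of "?R \<union> W" "nbhd_in V E W (Z - W)"] card_Un_le[of ?R W] by linarith
  moreover have "card ?R < m"
    using dense \<open>m \<le> card S\<close> by (rule card_without_neighbour_less) blast+
  ultimately show ?thesis by linarith
qed

lemma non_expanding_card_Int_less:
  assumes dense: "\<And>X' Y'. \<lbrakk>X' \<subseteq> X; Y' \<subseteq> Y; card X' = m; card Y' = m\<rbrakk> \<Longrightarrow>
                    \<exists>x\<in>X'. \<exists>y\<in>Y'. E x y"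
    and W: "non_expanding V E Z m d W"
    and "Y0 \<subseteq> Y" and "Y0 \<subseteq> V" and "Y0 \<subseteq> Z" and "(3 * d + 4) * m \<le> card Y0"
    and "finite V" and "finite Z"
  shows "card (W \<inter> X) < m"
proof (rule ccontr)
  assume large: "\<not> ?thesis"
  have "W \<subseteq> V" and card_W: "card W \<le> 3 * m"
    and card_N: "card (nbhd_in V E W (Z - W)) \<le> d * card W"
    using W by (simp_all add: non_expanding_def)
  have "card Y0 < card (nbhd_in V E W (Z - W)) + card W + m"
  proof (rule nbhd_in_lower_bound)
    show "\<exists>s\<in>S'. \<exists>t\<in>T'. E s t"
      if "S' \<subseteq> W \<inter> X" "T' \<subseteq> Y0" "card S' = m" "card T' = m" for S' T'
      using dense[of S' T'] that \<open>Y0 \<subseteq> Y\<close> by auto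
    show "finite W"
      using \<open>W \<subseteq> V\<close> \<open>finite V\<close> by (rule finite_subset)
  qed (use large assms(4,5,8) in simp_all)
  moreover have "d * card W \<le> 3 * (d * m)"
    using card_W by simp
  moreover have "(3 * d + 4) * m = 3 * (d * m) + 4 * m"
    by (simp add: algebra_simps)
  ultimately show False
    using card_N card_W \<open>(3 * d + 4) * m \<le> card Y0\<close> by linarith
qed

lemma nbhd_in_Un_subset:
  "nbhd_in V E (B \<union> U) (Z - (B \<union> U)) \<subseteq> nbhd_in V E B (Z - B) \<union> nbhd_in V E U (Z - B)"
  by (auto simp: nbhd_in_def ext_nbhd_def)

lemma expanding_outside_largest_non_expanding:
  assumes B: "non_expanding V E Z m d B"
    and largest: "\<And>W. non_expanding V E Z m d W \<Longrightarrow> card W \<le> card B"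
    and "card B \<le> 2 * m" and U: "U \<subseteq> V - B" "card U \<le> m"
    and "finite V" and "finite Z"
  shows "d * card U \<le> card (nbhd_in V E U (Z - B))"
proof (rule ccontr)
  assume less: "\<not> ?thesis"
  have "finite B" "finite U"
    using B U \<open>finite V\<close> finite_subset by (auto simp: non_expanding_def)
  then have card_BU: "card (B \<union> U) = card B + card U"
    using U by (subst card_Un_disjoint) auto
  have "U \<noteq> {}"
    using less by auto
  then have "card B < card (B \<union> U)"
    using card_BU \<open>finite U\<close> by (simp add: card_gt_0_iff)
  moreover have "non_expanding V E Z m d (B \<union> U)"
  proof -
    have "card (nbhd_in V E (B \<union> U) (Z - (B \<union> U)))
        \<le> card (nbhd_in V E B (Z - B) \<union> nbhd_in V E U (Z - B))"
      using \<open>finite Z\<close> by (intro card_mono nbhd_in_Un_subset) (simp add: nbhd_in_def)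
    also have "\<dots> \<le> card (nbhd_in V E B (Z - B)) + card (nbhd_in V E U (Z - B))"
      by (rule card_Un_le)
    also have "\<dots> \<le> d * card (B \<union> U)"
      using B less card_BU by (simp add: non_expanding_def algebra_simps)
    finally show ?thesis
      using B U card_BU \<open>card B \<le> 2 * m\<close> by (auto simp: non_expanding_def)
  qed
  ultimately show False
    using largest by (meson not_less)
qed

lemma ex_largest_non_expanding:
  assumes "finite V"
  obtains B where "non_expanding V E Z m d B"
    and "\<And>W. non_expanding V E Z m d W \<Longrightarrow> card W \<le> card B"
proof -
  have "non_expanding V E Z m d {}"
    by (simp add: non_expanding_def nbhd_in_def ext_nbhd_def)
  moreover have "\<forall>W. non_expanding V E Z m d W \<longrightarrow> card W < Suc (card V)"
    using \<open>finite V\<close> by (auto simp: non_expanding_def le_imp_less_Suc card_mono)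
  ultimately show ?thesis
    using ex_has_greatest_nat[of "non_expanding V E Z m d" "{}" card] that by blast
qed

theorem proposition3p36:
  fixes X Y X0 Y0 :: "'a set" and E :: "'a \<Rightarrow> 'a \<Rightarrow> bool" and m d :: nat
  assumes H: "bipartite_graph X Y E"
    and dense: "\<forall>X' Y'. X' \<subseteq> X \<and> Y' \<subseteq> Y \<and> card X' = m \<and> card Y' = m \<longrightarrow>
                  (\<exists>x\<in>X'. \<exists>y\<in>Y'. E x y)"
    and X0: "X0 \<subseteq> X" and Y0: "Y0 \<subseteq> Y"
    and cX0: "card X0 \<ge> (3 * d + 4) * m" and cY0: "card Y0 \<ge> (3 * d + 4) * m"
  shows "\<exists>B. B \<subseteq> X \<union> Y \<and> card B \<le> 2 * m \<and>
           (\<forall>U. U \<subseteq> (X \<union> Y) - B \<and> card U \<le> m \<longrightarrow>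
              card (nbhd_in (X \<union> Y) E U ((X0 \<union> Y0) - B)) \<ge> d * card U)"
proof -
  let ?V = "X \<union> Y" and ?Z = "X0 \<union> Y0"
  have "finite ?V" and "finite ?Z" and sym: "\<And>u v. E u v \<Longrightarrow> E v u"
    using H X0 Y0 finite_subset by (auto simp: bipartite_graph_def)
  have dense_XY: "\<exists>x\<in>X'. \<exists>y\<in>Y'. E x y"
    if "X' \<subseteq> X" "Y' \<subseteq> Y" "card X' = m" "card Y' = m" for X' Y'
    using dense that by simp
  have dense_YX: "\<exists>y\<in>Y'. \<exists>x\<in>X'. E y x"
    if "Y' \<subseteq> Y" "X' \<subseteq> X" "card Y' = m" "card X' = m" for Y' X'
    using dense_XY[OF that(2,1,4,3)] sym by blast
  obtain B where B: "non_expanding ?V E ?Z m d B"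
    and largest: "\<And>W. non_expanding ?V E ?Z m d W \<Longrightarrow> card W \<le> card B"
    using ex_largest_non_expanding[OF \<open>finite ?V\<close>, where E = E and Z = ?Z and m = m and d = d]
    by blast
  have "card (B \<inter> X) < m"
    by (rule non_expanding_card_Int_less[OF dense_XY B Y0])
      (use Y0 cY0 \<open>finite ?V\<close> \<open>finite ?Z\<close> in auto)
  moreover have "card (B \<inter> Y) < m"
    by (rule non_expanding_card_Int_less[OF dense_YX B X0])
      (use X0 cX0 \<open>finite ?V\<close> \<open>finite ?Z\<close> in auto)
  moreover have "card B \<le> card (B \<inter> X) + card (B \<inter> Y)"
    using B card_Un_le[of "B \<inter> X" "B \<inter> Y"]
    by (simp add: non_expanding_def Int_Un_distrib[symmetric] Int_absorb2)
  ultimately have "card B \<le> 2 * m"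
    by linarith
  moreover have "B \<subseteq> ?V"
    using B by (simp add: non_expanding_def)
  ultimately show ?thesis
    using expanding_outside_largest_non_expanding[OF B largest] \<open>finite ?V\<close> \<open>finite ?Z\<close>
    by blast
qed

end
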